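(* Let $(P,r)$ and $(\overline P,r)$ be MDPs on the same finite state and action spaces with rewards in $[0,1]$. Suppose there exist $m,\beta>1$, $\gamma\in(0,1)$ and a policy $\pi$ such that $$\|V^{\pi^\star_\gamma}_\gamma-\overline V^{\pi^\star_\gamma}_\gamma\|_\infty\le\frac{\beta}{1-\gamma}\sqrt{\frac{\|V^{\pi^\star_\gamma}_\gamma\|_{\mathrm{sp}}+1}{m}},\qquad \overline V^\pi_\gamma\ge\overline V^\star_\gamma-\frac1m\mathbf 1,\qquad \|\overline V^\pi_\gamma-V^\pi_\gamma\|_\infty\le\frac{\beta}{1-\gamma}\sqrt{\frac{\|\overline V^\pi_\gamma\|_{\mathrm{sp}}+1}{m}}.$$ Then $$\|\overline V^\star_\gamma-V^\star_\gamma\|_\infty\le\frac{2\beta^2}{(1-\gamma)^2m}+\frac{4\beta}{1-\gamma}\sqrt{\frac{\|V^\star_\gamma\|_{\mathrm{sp}}+1+\frac1m}{m}}+\frac4m$$ and $$\|\overline V^\star_\gamma-V^\star_\gamma\|_\infty\le\frac{2\beta^2}{(1-\gamma)^2m}+\frac{4\beta}{1-\gamma}\sqrt{\frac{\|\overline V^\star_\gamma\|_{\mathrm{sp}}+1+\frac1m}{m}}+\frac4m.$$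
   Context: $V^{\pi'}_\gamma$, $V^\star_\gamma$ are the discounted value of policy $\pi'$ and optimal value in the DMDP $(P,r,\gamma)$, with $\pi^\star_\gamma$ an optimal policy of it; $\overline V^{\pi'}_\gamma,\overline V^\star_\gamma$ are the analogous quantities in $(\overline P,r,\gamma)$. $V^\pi_\gamma(s)=\mathbb{E}^\pi_s[\sum_{t\ge0}\gamma^tr(S_t,A_t)]$. $\|x\|_{\mathrm{sp}}=\max_sx(s)-\min_sx(s)$. *)

theory Defs
  imports "HOL-Analysis.Analysis"
begin

definition is_kernel :: "('s::finite \<Rightarrow> 'a::finite \<Rightarrow> 's \<Rightarrow> real) \<Rightarrow> bool" where
  "is_kernel P \<longleftrightarrow> (\<forall>s a s'. 0 \<le> P s a s') \<and> (\<forall>s a. (\<Sum>s'\<in>UNIV. P s a s') = 1)"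

definition is_policy :: "('s::finite \<Rightarrow> 'a::finite \<Rightarrow> real) \<Rightarrow> bool" where
  "is_policy \<pi> \<longleftrightarrow> (\<forall>s a. 0 \<le> \<pi> s a) \<and> (\<forall>s. (\<Sum>a\<in>UNIV. \<pi> s a) = 1)"

fun state_dist :: "('s::finite \<Rightarrow> 'a::finite \<Rightarrow> 's \<Rightarrow> real) \<Rightarrow> ('s \<Rightarrow> 'a \<Rightarrow> real)
    \<Rightarrow> nat \<Rightarrow> 's \<Rightarrow> 's \<Rightarrow> real" where
  "state_dist P \<pi> 0 s s' = (if s' = s then 1 else 0)"
| "state_dist P \<pi> (Suc n) s s' =
     (\<Sum>u\<in>UNIV. state_dist P \<pi> n s u * (\<Sum>a\<in>UNIV. \<pi> u a * P u a s'))"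

definition disc_value :: "('s::finite \<Rightarrow> 'a::finite \<Rightarrow> 's \<Rightarrow> real) \<Rightarrow> ('s \<Rightarrow> 'a \<Rightarrow> real)
    \<Rightarrow> real \<Rightarrow> ('s \<Rightarrow> 'a \<Rightarrow> real) \<Rightarrow> 's \<Rightarrow> real" where
  "disc_value P r \<gamma> \<pi> s =
     (\<Sum>t. \<gamma> ^ t * (\<Sum>u\<in>UNIV. state_dist P \<pi> t s u * (\<Sum>a\<in>UNIV. \<pi> u a * r u a)))"

definition opt_value :: "('s::finite \<Rightarrow> 'a::finite \<Rightarrow> 's \<Rightarrow> real) \<Rightarrow> ('s \<Rightarrow> 'a \<Rightarrow> real)
    \<Rightarrow> real \<Rightarrow> 's \<Rightarrow> real" where
  "opt_value P r \<gamma> s = (SUP \<pi>\<in>{\<pi>. is_policy \<pi>}. disc_value P r \<gamma> \<pi> s)"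

definition is_opt_policy :: "('s::finite \<Rightarrow> 'a::finite \<Rightarrow> 's \<Rightarrow> real) \<Rightarrow> ('s \<Rightarrow> 'a \<Rightarrow> real)
    \<Rightarrow> real \<Rightarrow> ('s \<Rightarrow> 'a \<Rightarrow> real) \<Rightarrow> bool" where
  "is_opt_policy P r \<gamma> \<pi> \<longleftrightarrow> is_policy \<pi> \<and> (\<forall>s. disc_value P r \<gamma> \<pi> s = opt_value P r \<gamma> s)"

definition sup_norm :: "('s::finite \<Rightarrow> real) \<Rightarrow> real" where
  "sup_norm x = Max (range (\<lambda>s. \<bar>x s\<bar>))"

definition span_norm :: "('s::finite \<Rightarrow> real) \<Rightarrow> real" where
  "span_norm x = Max (range x) - Min (range x)"

end

theory Submission
  imports Defs
begin

text \<open>Let D be the sup-distance between the two optimal value functions and c = \<beta>/(1 - \<gamma>).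
  Since \<pi>star is optimal for P and \<pi> is 1/m-optimal for Pbar, D is at most the larger of the two
  assumed policy-evaluation errors plus 1/m. Every span appearing in those error bounds is within
  2D + 1/m of the span S of either optimal value function, so both errors are at most
  c sqrt((S + 1 + 1/m)/m) + c sqrt(2D/m), and by AM-GM c sqrt(2D/m) \<le> c^2/m + D/2. Absorbing D/2
  into the left-hand side gives the bound even with 2 in place of both factors 4.\<close>

lemma convex_combination_in_unit_interval:
  fixes p f :: "'i \<Rightarrow> real"
  assumes "finite I" "\<And>i. i \<in> I \<Longrightarrow> 0 \<le> p i" "sum p I = 1"
    and "\<And>i. i \<in> I \<Longrightarrow> 0 \<le> f i \<and> f i \<le> 1"
  shows "0 \<le> (\<Sum>i\<in>I. p i * f i) \<and> (\<Sum>i\<in>I. p i * f i) \<le> 1"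
proof
  show "0 \<le> (\<Sum>i\<in>I. p i * f i)"
    using assms by (intro sum_nonneg) auto
  have "(\<Sum>i\<in>I. p i * f i) \<le> sum p I"
    using assms by (intro sum_mono) (simp add: mult_left_le)
  then show "(\<Sum>i\<in>I. p i * f i) \<le> 1"
    using assms(3) by simp
qed

lemma state_dist_nonneg:
  assumes "is_kernel P" "is_policy \<pi>"
  shows "0 \<le> state_dist P \<pi> n s u"
  using assms
  by (induction n arbitrary: u)
     (auto simp: is_kernel_def is_policy_def intro!: sum_nonneg mult_nonneg_nonneg)

lemma sum_state_dist:
  assumes "is_kernel P" "is_policy \<pi>"
  shows "(\<Sum>u\<in>UNIV. state_dist P \<pi> n s u) = 1"
proof (induction n)
  case 0
  then show ?case by simp
next
  case (Suc n)
  let ?d = "state_dist P \<pi> n s"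
  have "(\<Sum>u\<in>UNIV. state_dist P \<pi> (Suc n) s u)
      = (\<Sum>v\<in>UNIV. \<Sum>u\<in>UNIV. \<Sum>a\<in>UNIV. ?d v * (\<pi> v a * P v a u))"
    unfolding state_dist.simps sum_distrib_left by (rule sum.swap)
  also have "\<dots> = (\<Sum>v\<in>UNIV. \<Sum>a\<in>UNIV. \<Sum>u\<in>UNIV. ?d v * (\<pi> v a * P v a u))"
    by (rule sum.cong[OF refl], rule sum.swap)
  also have "\<dots> = (\<Sum>v\<in>UNIV. ?d v)"
    using assms by (simp add: is_kernel_def is_policy_def flip: sum_distrib_left)
  finally show ?case
    using Suc by simp
qed

lemma expected_reward_in_unit_interval:
  assumes "is_kernel P" "is_policy \<pi>" "\<And>s a. 0 \<le> r s a \<and> r s a \<le> 1"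
  shows "0 \<le> (\<Sum>u\<in>UNIV. state_dist P \<pi> t s u * (\<Sum>a\<in>UNIV. \<pi> u a * r u a))
    \<and> (\<Sum>u\<in>UNIV. state_dist P \<pi> t s u * (\<Sum>a\<in>UNIV. \<pi> u a * r u a)) \<le> 1"
proof -
  have policy_average:
    "0 \<le> (\<Sum>a\<in>UNIV. \<pi> u a * r u a) \<and> (\<Sum>a\<in>UNIV. \<pi> u a * r u a) \<le> 1" for u
    using assms(2,3) by (intro convex_combination_in_unit_interval) (auto simp: is_policy_def)
  show ?thesis
    by (rule convex_combination_in_unit_interval)
       (use policy_average assms(1,2) in \<open>auto simp: state_dist_nonneg sum_state_dist\<close>)
qed

lemma disc_value_le:
  assumes "is_kernel P" "is_policy \<pi>" "\<And>s a. 0 \<le> r s a \<and> r s a \<le> 1" "0 \<le> \<gamma>" "\<gamma> < 1"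
  shows "disc_value P r \<gamma> \<pi> s \<le> 1 / (1 - \<gamma>)"
proof -
  let ?f = "\<lambda>t. \<gamma> ^ t * (\<Sum>u\<in>UNIV. state_dist P \<pi> t s u * (\<Sum>a\<in>UNIV. \<pi> u a * r u a))"
  have f_bounds: "0 \<le> ?f t \<and> ?f t \<le> \<gamma> ^ t" for t
    using expected_reward_in_unit_interval[OF assms(1-3), of t s] assms(4)
    by (simp add: mult_left_le)
  have geometric: "summable (\<lambda>t. \<gamma> ^ t)"
    using assms(4,5) by simp
  have "summable ?f"
    using f_bounds by (intro summable_comparison_test[OF _ geometric]) auto
  then have "suminf ?f \<le> (\<Sum>t. \<gamma> ^ t)"
    using f_bounds geometric by (intro suminf_le) auto
  also have "\<dots> = 1 / (1 - \<gamma>)"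
    using assms(4,5) by (simp add: suminf_geometric)
  finally show ?thesis
    by (simp add: disc_value_def)
qed

lemma disc_value_le_opt_value:
  assumes "is_kernel P" "is_policy \<pi>" "\<And>s a. 0 \<le> r s a \<and> r s a \<le> 1" "0 \<le> \<gamma>" "\<gamma> < 1"
  shows "disc_value P r \<gamma> \<pi> s \<le> opt_value P r \<gamma> s"
  unfolding opt_value_def
proof (rule cSUP_upper)
  show "bdd_above ((\<lambda>\<pi>. disc_value P r \<gamma> \<pi> s) ` {\<pi>. is_policy \<pi>})"
    using disc_value_le[OF assms(1) _ assms(3-5)] by (intro bdd_aboveI2) auto
qed (use assms(2) in simp)

lemma abs_le_sup_norm: "\<bar>x s\<bar> \<le> sup_norm x"
  unfolding sup_norm_def by (rule Max_ge) auto

lemma sup_norm_nonneg: "0 \<le> sup_norm x"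
  using abs_le_sup_norm[of x] abs_ge_zero order_trans by blast

lemma sup_norm_le: "(\<And>s. \<bar>x s\<bar> \<le> B) \<Longrightarrow> sup_norm x \<le> B"
  unfolding sup_norm_def by (subst Max_le_iff) auto

lemma span_norm_nonneg: "0 \<le> span_norm x"
proof -
  fix s
  have "Min (range x) \<le> x s" "x s \<le> Max (range x)"
    by (auto intro: Max_ge Min_le)
  then show ?thesis
    unfolding span_norm_def by linarith
qed

lemma span_norm_le:
  assumes "\<And>s. y s - d\<^sub>2 \<le> x s" "\<And>s. x s \<le> y s + d\<^sub>1"
  shows "span_norm x \<le> span_norm y + d\<^sub>1 + d\<^sub>2"
proof -
  have y_range: "Min (range y) \<le> y s" "y s \<le> Max (range y)" for s
    by (auto intro: Max_ge Min_le)
  have "x s \<le> Max (range y) + d\<^sub>1" for s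
    using assms(2)[of s] y_range(2)[of s] by linarith
  then have "Max (range x) \<le> Max (range y) + d\<^sub>1"
    by (subst Max_le_iff) auto
  moreover have "Min (range y) - d\<^sub>2 \<le> x s" for s
    using assms(1)[of s] y_range(1)[of s] by linarith
  then have "Min (range y) - d\<^sub>2 \<le> Min (range x)"
    by (subst Min_ge_iff) auto
  ultimately show ?thesis
    unfolding span_norm_def by linarith
qed

lemma abs_diff_le_sup_norm: "\<bar>x s - y s\<bar> \<le> sup_norm (\<lambda>s. x s - y s)"
  using abs_le_sup_norm[of "\<lambda>s. x s - y s"] by simp

lemma sup_norm_minus_commute: "sup_norm (\<lambda>s. x s - y s) = sup_norm (\<lambda>s. y s - x s)"
  by (simp add: sup_norm_def abs_minus_commute)

lemma span_norm_le_add_sup_norm: "span_norm x \<le> span_norm y + 2 * sup_norm (\<lambda>s. x s - y s)"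
proof -
  let ?d = "sup_norm (\<lambda>s. x s - y s)"
  have "span_norm x \<le> span_norm y + ?d + ?d"
  proof (rule span_norm_le)
    fix s
    from abs_diff_le_sup_norm[of x s y] show "y s - ?d \<le> x s" "x s \<le> y s + ?d"
      by (simp_all add: abs_le_iff)
  qed
  then show ?thesis
    by simp
qed

lemma mult_sqrt_divide_mono:
  fixes c m X X' :: real
  assumes "0 \<le> c" "0 < m" "X \<le> X'"
  shows "c * sqrt (X / m) \<le> c * sqrt (X' / m)"
  using assms by (intro mult_left_mono real_sqrt_le_mono divide_right_mono) auto

lemma sqrt_perturbation_le:
  fixes c m X D :: real
  assumes "0 \<le> c" "0 < m" "0 \<le> X" "0 \<le> D"
  shows "c * sqrt ((X + 2 * D) / m) \<le> c * sqrt (X / m) + c\<^sup>2 / m + D / 2"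
proof -
  have "sqrt ((X + 2 * D) / m) \<le> sqrt (X / m) + sqrt (2 * D / m)"
    using sqrt_add_le_add_sqrt[of "X / m" "2 * D / m"] assms by (simp add: add_divide_distrib)
  moreover have "c * sqrt (2 * D / m) = sqrt ((2 * c\<^sup>2 / m) * D)"
  proof -
    have "(2 * c\<^sup>2 / m) * D = c\<^sup>2 * (2 * D / m)"
      by simp
    then show ?thesis
      using assms(1) by (simp only: real_sqrt_mult real_sqrt_abs abs_of_nonneg)
  qed
  moreover have "sqrt ((2 * c\<^sup>2 / m) * D) \<le> c\<^sup>2 / m + D / 2"
    using arith_geo_mean_sqrt[of "2 * c\<^sup>2 / m" D] assms by simp
  ultimately show ?thesis
    using assms(1) by (smt (verit) distrib_left mult_left_mono)
qed

lemma self_bounding_le: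
  fixes c m S D E :: real
  assumes "0 \<le> c" "0 < m" "0 \<le> S" "0 \<le> D"
    and "D \<le> E + 1 / m" and "E \<le> c * sqrt ((S + 1 + 1 / m + 2 * D) / m)"
  shows "D \<le> 2 * c\<^sup>2 / m + 2 * c * sqrt ((S + 1 + 1 / m) / m) + 2 / m"
  using sqrt_perturbation_le[of c m "S + 1 + 1 / m" D] assms by simp

lemma sup_norm_diff_le_of_span_bounds:
  fixes V W :: "'s::finite \<Rightarrow> real"
  assumes c: "0 \<le> c" and m: "0 < m"
    and D_le: "sup_norm (\<lambda>s. W s - V s) \<le> max A B + 1 / m"
    and A: "A \<le> c * sqrt ((span_norm V + 1) / m)"
    and B: "B \<le> c * sqrt ((span_norm W + 1 + 1 / m) / m)"
  shows "sup_norm (\<lambda>s. W s - V s) \<le> 2 * c\<^sup>2 / m + 2 * c * sqrt ((span_norm V + 1 + 1 / m) / m) + 2 / m"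
    and "sup_norm (\<lambda>s. W s - V s) \<le> 2 * c\<^sup>2 / m + 2 * c * sqrt ((span_norm W + 1 + 1 / m) / m) + 2 / m"
proof -
  let ?D = "sup_norm (\<lambda>s. W s - V s)"
  have D: "0 \<le> ?D" and inv_m: "0 \<le> 1 / m"
    using m by (simp_all add: sup_norm_nonneg)
  have span_V: "span_norm V \<le> span_norm W + 2 * ?D"
    by (metis span_norm_le_add_sup_norm sup_norm_minus_commute)
  have span_W: "span_norm W \<le> span_norm V + 2 * ?D"
    by (rule span_norm_le_add_sup_norm)
  note mono = mult_sqrt_divide_mono[OF c m]
  have "max A B \<le> c * sqrt ((span_norm V + 1 + 1 / m + 2 * ?D) / m)"
    by (intro max.boundedI order_trans[OF A mono] order_trans[OF B mono])
       (use span_W D inv_m in linarith)+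
  then show "?D \<le> 2 * c\<^sup>2 / m + 2 * c * sqrt ((span_norm V + 1 + 1 / m) / m) + 2 / m"
    by (rule self_bounding_le[OF c m span_norm_nonneg D D_le])
  have "max A B \<le> c * sqrt ((span_norm W + 1 + 1 / m + 2 * ?D) / m)"
    by (intro max.boundedI order_trans[OF A mono] order_trans[OF B mono])
       (use span_V D inv_m in linarith)+
  then show "?D \<le> 2 * c\<^sup>2 / m + 2 * c * sqrt ((span_norm W + 1 + 1 / m) / m) + 2 / m"
    by (rule self_bounding_le[OF c m span_norm_nonneg D D_le])
qed

lemma sup_norm_opt_value_diff_le:
  assumes "is_kernel P" "is_kernel Pbar" "\<And>s a. 0 \<le> r s a \<and> r s a \<le> 1" "0 \<le> \<gamma>" "\<gamma> < 1"
    and "is_opt_policy P r \<gamma> \<pi>star" "is_policy \<pi>"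
    and "\<And>s. disc_value Pbar r \<gamma> \<pi> s \<ge> opt_value Pbar r \<gamma> s - \<epsilon>"
  shows "sup_norm (\<lambda>s. opt_value Pbar r \<gamma> s - opt_value P r \<gamma> s)
    \<le> max (sup_norm (\<lambda>s. disc_value P r \<gamma> \<pi>star s - disc_value Pbar r \<gamma> \<pi>star s))
           (sup_norm (\<lambda>s. disc_value Pbar r \<gamma> \<pi> s - disc_value P r \<gamma> \<pi> s)) + \<epsilon>"
    (is "_ \<le> max ?A ?B + \<epsilon>")
proof (rule sup_norm_le)
  fix s
  have star: "is_policy \<pi>star" "disc_value P r \<gamma> \<pi>star s = opt_value P r \<gamma> s"
    using assms(6) by (auto simp: is_opt_policy_def)
  have "disc_value Pbar r \<gamma> \<pi>star s \<le> opt_value Pbar r \<gamma> s"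
       "disc_value P r \<gamma> \<pi> s \<le> opt_value P r \<gamma> s"
       "disc_value Pbar r \<gamma> \<pi> s \<le> opt_value Pbar r \<gamma> s"
    using disc_value_le_opt_value assms(1-5,7) star(1) by blast+
  moreover have "\<bar>disc_value P r \<gamma> \<pi>star s - disc_value Pbar r \<gamma> \<pi>star s\<bar> \<le> ?A"
    and "\<bar>disc_value Pbar r \<gamma> \<pi> s - disc_value P r \<gamma> \<pi> s\<bar> \<le> ?B"
    by (rule abs_diff_le_sup_norm)+
  ultimately show "\<bar>opt_value Pbar r \<gamma> s - opt_value P r \<gamma> s\<bar> \<le> max ?A ?B + \<epsilon>"
    using star(2) assms(8)[of s] by (auto simp: abs_le_iff)
qed

theorem lemma7:
  fixes P Pbar :: "'s::finite \<Rightarrow> 'a::finite \<Rightarrow> 's \<Rightarrow> real"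
    and r :: "'s \<Rightarrow> 'a \<Rightarrow> real"
    and m \<beta> \<gamma> :: real
    and \<pi> \<pi>star :: "'s \<Rightarrow> 'a \<Rightarrow> real"
  assumes "is_kernel P" and "is_kernel Pbar"
    and "\<And>s a. 0 \<le> r s a \<and> r s a \<le> 1"
    and "m > 1" and "\<beta> > 1" and "0 < \<gamma>" and "\<gamma> < 1"
    and "is_opt_policy P r \<gamma> \<pi>star"
    and "is_policy \<pi>"
    and "sup_norm (\<lambda>s. disc_value P r \<gamma> \<pi>star s - disc_value Pbar r \<gamma> \<pi>star s)
           \<le> \<beta> / (1 - \<gamma>) * sqrt ((span_norm (disc_value P r \<gamma> \<pi>star) + 1) / m)"
    and "\<And>s. disc_value Pbar r \<gamma> \<pi> s \<ge> opt_value Pbar r \<gamma> s - 1 / m"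
    and "sup_norm (\<lambda>s. disc_value Pbar r \<gamma> \<pi> s - disc_value P r \<gamma> \<pi> s)
           \<le> \<beta> / (1 - \<gamma>) * sqrt ((span_norm (disc_value Pbar r \<gamma> \<pi>) + 1) / m)"
  shows "(sup_norm (\<lambda>s. opt_value Pbar r \<gamma> s - opt_value P r \<gamma> s)
           \<le> 2 * \<beta>^2 / ((1 - \<gamma>)^2 * m)
             + 4 * \<beta> / (1 - \<gamma>) * sqrt ((span_norm (opt_value P r \<gamma>) + 1 + 1 / m) / m)
             + 4 / m)
    \<and> (sup_norm (\<lambda>s. opt_value Pbar r \<gamma> s - opt_value P r \<gamma> s)
           \<le> 2 * \<beta>^2 / ((1 - \<gamma>)^2 * m)
             + 4 * \<beta> / (1 - \<gamma>) * sqrt ((span_norm (opt_value Pbar r \<gamma>) + 1 + 1 / m) / m)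
             + 4 / m)"
proof -
  define c where "c = \<beta> / (1 - \<gamma>)"
  define V where "V = opt_value P r \<gamma>"
  define Vbar where "Vbar = opt_value Pbar r \<gamma>"
  have c: "0 \<le> c" and m: "0 < m"
    using assms(4,5,7) by (simp_all add: c_def)
  have "disc_value P r \<gamma> \<pi>star = V"
    using assms(8) by (auto simp: is_opt_policy_def V_def)
  then have A: "sup_norm (\<lambda>s. disc_value P r \<gamma> \<pi>star s - disc_value Pbar r \<gamma> \<pi>star s)
      \<le> c * sqrt ((span_norm V + 1) / m)"
    using assms(10) by (simp add: c_def)
  have "disc_value Pbar r \<gamma> \<pi> s \<le> Vbar s" for s
    unfolding Vbar_def using assms(2,3,6,7,9) by (intro disc_value_le_opt_value) auto
  then have "span_norm (disc_value Pbar r \<gamma> \<pi>) + 1 \<le> span_norm Vbar + 1 + 1 / m"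
    using span_norm_le[of Vbar "1 / m" "disc_value Pbar r \<gamma> \<pi>" 0] assms(11) by (auto simp: Vbar_def)
  then have B: "sup_norm (\<lambda>s. disc_value Pbar r \<gamma> \<pi> s - disc_value P r \<gamma> \<pi> s)
      \<le> c * sqrt ((span_norm Vbar + 1 + 1 / m) / m)"
    by (rule order_trans[OF assms(12)[folded c_def] mult_sqrt_divide_mono[OF c m]])
  note D_le = sup_norm_opt_value_diff_le[OF assms(1-3) less_imp_le[OF assms(6)] assms(7-9,11),
      folded V_def Vbar_def]
  note bounds = sup_norm_diff_le_of_span_bounds[OF c m D_le A B]
  have "0 \<le> c * sqrt ((span_norm V + 1 + 1 / m) / m)" "0 \<le> c * sqrt ((span_norm Vbar + 1 + 1 / m) / m)"
    using c m span_norm_nonneg[of V] span_norm_nonneg[of Vbar] by simp_all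
  moreover have "2 / m \<le> 4 / m"
    using m by (simp add: divide_right_mono)
  moreover have "2 * \<beta>^2 / ((1 - \<gamma>)^2 * m) = 2 * c\<^sup>2 / m" "4 * \<beta> / (1 - \<gamma>) = 4 * c"
    by (simp_all add: c_def power_divide)
  ultimately show ?thesis
    using bounds unfolding V_def Vbar_def by (simp add: mult.assoc)
qed

end
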